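(* Let $i\in[n]$ be such that $m_i=1$, and let $N\subseteq M_i$. Then $M_i\setminus N$ is an abelian ideal if and only if there exists $w\in W^i$ such that $N=\overline N(w)$.
   Context: $\Phi$ is a finite irreducible crystallographic root system with basis $\Pi=\{\alpha_1,\dots,\alpha_n\}$, positive roots $\Phi^+$, highest root $\theta=\sum_i m_i\alpha_i$, Weyl group $W$ with length $\ell$. The root poset is $\Phi^+$ with $\beta\ge\gamma$ iff $\beta-\gamma$ is a nonnegative integer combination of simple roots; an abelian ideal is a subset of $\Phi^+$ closed upward in the root poset with $(I+I)\cap\Phi=\emptyset$. $M_i=\{\beta\in\Phi^+\mid\beta\ge\alpha_i\}$; $D_r(w)=\{\alpha\in\Pi\mid\ell(ws_\alpha)<\ell(w)\}$; $W^i=\{w\in W\mid D_r(w)\subseteq\{\alpha_i\}\}$; $\overline N(w)=\{\beta\in\Phi^+\mid w(\beta)\in-\Phi^+\}$. *)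

theory Defs
  imports "HOL-Analysis.Analysis"
begin

definition refl :: "'a::euclidean_space \<Rightarrow> 'a \<Rightarrow> 'a" where
  "refl \<alpha> x = x - (2 * (x \<bullet> \<alpha>) / (\<alpha> \<bullet> \<alpha>)) *\<^sub>R \<alpha>"

definition root_system :: "'a::euclidean_space set \<Rightarrow> bool" where
  "root_system \<Phi> \<longleftrightarrow>
     finite \<Phi> \<and> 0 \<notin> \<Phi> \<and> span \<Phi> = UNIV \<and>
     (\<forall>\<alpha>\<in>\<Phi>. refl \<alpha> ` \<Phi> = \<Phi>) \<and>
     (\<forall>\<alpha>\<in>\<Phi>. \<forall>\<beta>\<in>\<Phi>. 2 * (\<beta> \<bullet> \<alpha>) / (\<alpha> \<bullet> \<alpha>) \<in> \<int>) \<and>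
     (\<forall>\<alpha>\<in>\<Phi>. \<forall>c::real. c *\<^sub>R \<alpha> \<in> \<Phi> \<longrightarrow> c = 1 \<or> c = -1)"

definition irreducible_root_system :: "'a::euclidean_space set \<Rightarrow> bool" where
  "irreducible_root_system \<Phi> \<longleftrightarrow> root_system \<Phi> \<and>
     \<not> (\<exists>A B. A \<noteq> {} \<and> B \<noteq> {} \<and> A \<union> B = \<Phi> \<and> (\<forall>a\<in>A. \<forall>b\<in>B. a \<bullet> b = 0))"

definition nonneg_comb :: "'a::euclidean_space set \<Rightarrow> 'a \<Rightarrow> bool" where
  "nonneg_comb \<Delta> v \<longleftrightarrow> (\<exists>c::'a \<Rightarrow> nat. v = (\<Sum>\<alpha>\<in>\<Delta>. real (c \<alpha>) *\<^sub>R \<alpha>))"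

definition root_basis :: "'a::euclidean_space set \<Rightarrow> 'a set \<Rightarrow> bool" where
  "root_basis \<Phi> \<Delta> \<longleftrightarrow> \<Delta> \<subseteq> \<Phi> \<and> independent \<Delta> \<and>
     (\<forall>\<beta>\<in>\<Phi>. nonneg_comb \<Delta> \<beta> \<or> nonneg_comb \<Delta> (- \<beta>))"

definition pos_roots :: "'a::euclidean_space set \<Rightarrow> 'a set \<Rightarrow> 'a set" where
  "pos_roots \<Phi> \<Delta> = {\<beta>\<in>\<Phi>. nonneg_comb \<Delta> \<beta>}"

definition root_le :: "'a::euclidean_space set \<Rightarrow> 'a \<Rightarrow> 'a \<Rightarrow> bool" where
  "root_le \<Delta> \<gamma> \<beta> \<longleftrightarrow> nonneg_comb \<Delta> (\<beta> - \<gamma>)"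

definition highest_root :: "'a::euclidean_space set \<Rightarrow> 'a set \<Rightarrow> 'a" where
  "highest_root \<Phi> \<Delta> = (THE \<theta>. \<theta> \<in> pos_roots \<Phi> \<Delta> \<and> (\<forall>\<beta>\<in>pos_roots \<Phi> \<Delta>. root_le \<Delta> \<beta> \<theta>))"

definition root_coeff :: "'a::euclidean_space set \<Rightarrow> 'a \<Rightarrow> 'a \<Rightarrow> real" where
  "root_coeff \<Delta> \<beta> \<alpha> = representation \<Delta> \<beta> \<alpha>"

definition refl_word :: "'a::euclidean_space list \<Rightarrow> 'a \<Rightarrow> 'a" where
  "refl_word ws = foldr (\<lambda>\<alpha> f. refl \<alpha> \<circ> f) ws id"

text \<open>Weyl group: the group generated by all reflections s_alpha, alpha in Phi
  (finite products suffice since reflections are involutions).\<close>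
definition weyl_group :: "'a::euclidean_space set \<Rightarrow> ('a \<Rightarrow> 'a) set" where
  "weyl_group \<Phi> = {refl_word ws | ws. set ws \<subseteq> \<Phi>}"

definition weyl_length :: "'a::euclidean_space set \<Rightarrow> ('a \<Rightarrow> 'a) \<Rightarrow> nat" where
  "weyl_length \<Delta> w = (LEAST k. \<exists>ws. set ws \<subseteq> \<Delta> \<and> length ws = k \<and> refl_word ws = w)"

definition right_descents :: "'a::euclidean_space set \<Rightarrow> ('a \<Rightarrow> 'a) \<Rightarrow> 'a set" where
  "right_descents \<Delta> w = {\<alpha>\<in>\<Delta>. weyl_length \<Delta> (w \<circ> refl \<alpha>) < weyl_length \<Delta> w}"

definition min_coset_reps :: "'a::euclidean_space set \<Rightarrow> 'a set \<Rightarrow> 'a \<Rightarrow> ('a \<Rightarrow> 'a) set" where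
  "min_coset_reps \<Phi> \<Delta> \<alpha>i = {w \<in> weyl_group \<Phi>. right_descents \<Delta> w \<subseteq> {\<alpha>i}}"

definition inv_set :: "'a::euclidean_space set \<Rightarrow> 'a set \<Rightarrow> ('a \<Rightarrow> 'a) \<Rightarrow> 'a set" where
  "inv_set \<Phi> \<Delta> w = {\<beta> \<in> pos_roots \<Phi> \<Delta>. w \<beta> \<in> uminus ` pos_roots \<Phi> \<Delta>}"

definition M_set :: "'a::euclidean_space set \<Rightarrow> 'a set \<Rightarrow> 'a \<Rightarrow> 'a set" where
  "M_set \<Phi> \<Delta> \<alpha>i = {\<beta> \<in> pos_roots \<Phi> \<Delta>. root_le \<Delta> \<alpha>i \<beta>}"

definition abelian_ideal :: "'a::euclidean_space set \<Rightarrow> 'a set \<Rightarrow> 'a set \<Rightarrow> bool" where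
  "abelian_ideal \<Phi> \<Delta> I \<longleftrightarrow> I \<subseteq> pos_roots \<Phi> \<Delta> \<and>
     (\<forall>\<beta>\<in>I. \<forall>\<gamma>\<in>pos_roots \<Phi> \<Delta>. root_le \<Delta> \<beta> \<gamma> \<longrightarrow> \<gamma> \<in> I) \<and>
     (\<forall>\<beta>\<in>I. \<forall>\<gamma>\<in>I. \<beta> + \<gamma> \<notin> \<Phi>)"

end

theory Submission
  imports Defs
begin

text \<open>Since \<open>m\<^sub>i = 1\<close>, every positive root has \<open>\<alpha>\<^sub>i\<close>-coefficient \<open>0\<close> or \<open>1\<close>, so \<open>M\<^sub>i\<close> (the positive
  roots with coefficient \<open>1\<close>) is upward closed and abelian, and \<open>M\<^sub>i - N\<close> is an abelian ideal
  exactly when \<open>N\<close> is a lower set of \<open>M\<^sub>i\<close>.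

  An element \<open>w \<in> W\<^sup>i\<close> sends every simple root other than \<open>\<alpha>\<^sub>i\<close> to a positive root, hence keeps
  positive every nonnegative combination of simple roots not involving \<open>\<alpha>\<^sub>i\<close>; this makes
  \<open>N(w)\<close> a lower set of \<open>M\<^sub>i\<close>. Conversely a lower set \<open>N\<close> is realised by induction on \<open>|N|\<close>:
  removing a root \<open>\<beta>\<close> of maximal height leaves a lower set \<open>N(w')\<close>, and \<open>w'(\<beta>)\<close> must be simple,
  since a splitting of \<open>w'(\<beta>)\<close> into two positive roots pulls back to a splitting of \<open>\<beta>\<close> that the
  lower set forbids; then \<open>N = N(s\<^sub>\<alpha> w')\<close> for \<open>\<alpha> = w'(\<beta>)\<close>. As the right descents of \<open>w\<close>
  are \<open>\<Delta> \<inter> N(w)\<close> and \<open>\<Delta> \<inter> M\<^sub>i = {\<alpha>\<^sub>i}\<close>, this \<open>w\<close> lies in \<open>W\<^sup>i\<close>.\<close>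

lemma finite_ex_max_image:
  fixes f :: "'b \<Rightarrow> real"
  assumes "finite S" "S \<noteq> {}"
  shows "\<exists>x\<in>S. \<forall>y\<in>S. f y \<le> f x"
proof -
  have "Max (f ` S) \<in> f ` S" using assms by (intro Max_in) auto
  then obtain x where "x \<in> S" "f x = Max (f ` S)" by auto
  moreover have "\<forall>y\<in>S. f y \<le> Max (f ` S)" using assms by auto
  ultimately show ?thesis by metis
qed

section \<open>Roots in coordinates of the simple roots\<close>

locale based_root_system =
  fixes \<Phi> \<Delta> :: "'a::euclidean_space set"
  assumes root_system: "root_system \<Phi>" and root_basis: "root_basis \<Phi> \<Delta>"
begin

abbreviation pos :: "'a set" where "pos \<equiv> pos_roots \<Phi> \<Delta>"
abbreviation coef :: "'a \<Rightarrow> 'a \<Rightarrow> real" where "coef \<equiv> root_coeff \<Delta>"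
definition neg_root :: "'a \<Rightarrow> bool" where "neg_root \<beta> \<longleftrightarrow> - \<beta> \<in> pos"

lemma finite_roots: "finite \<Phi>" and zero_not_root: "0 \<notin> \<Phi>" and span_roots: "span \<Phi> = UNIV"
  and refl_root: "\<alpha> \<in> \<Phi> \<Longrightarrow> \<beta> \<in> \<Phi> \<Longrightarrow> refl \<alpha> \<beta> \<in> \<Phi>"
  and cartan_int: "\<alpha> \<in> \<Phi> \<Longrightarrow> \<beta> \<in> \<Phi> \<Longrightarrow> 2 * (\<beta> \<bullet> \<alpha>) / (\<alpha> \<bullet> \<alpha>) \<in> \<int>"
  and root_multiple: "\<alpha> \<in> \<Phi> \<Longrightarrow> c *\<^sub>R \<alpha> \<in> \<Phi> \<Longrightarrow> c = 1 \<or> c = -1"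
  using root_system unfolding root_system_def by auto

lemma simple_roots: "\<Delta> \<subseteq> \<Phi>" and independent_simple: "independent \<Delta>"
  and root_sign: "\<beta> \<in> \<Phi> \<Longrightarrow> nonneg_comb \<Delta> \<beta> \<or> nonneg_comb \<Delta> (-\<beta>)"
  using root_basis unfolding root_basis_def by auto

lemma finite_simple: "finite \<Delta>"
  using simple_roots finite_roots finite_subset by blast

lemma root_nonzero: "\<alpha> \<in> \<Phi> \<Longrightarrow> \<alpha> \<noteq> 0"
  using zero_not_root by auto

lemma nonneg_comb_in_span: "nonneg_comb \<Delta> v \<Longrightarrow> v \<in> span \<Delta>"
  unfolding nonneg_comb_def by (auto intro!: span_sum span_scale intro: span_base)

lemma span_simple: "span \<Delta> = UNIV"
proof -
  have "\<Phi> \<subseteq> span \<Delta>"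
    using root_sign nonneg_comb_in_span span_neg by (metis minus_minus subsetI)
  hence "span \<Phi> \<subseteq> span \<Delta>" by (simp add: span_minimal)
  with span_roots show ?thesis by auto
qed

lemma coef_add: "coef (u + v) a = coef u a + coef v a"
  and coef_diff: "coef (u - v) a = coef u a - coef v a"
  and coef_neg: "coef (- v) a = - coef v a"
  and coef_scale: "coef (r *\<^sub>R v) a = r * coef v a"
  unfolding root_coeff_def
  using real_vector.representation_add[OF independent_simple]
    real_vector.representation_diff[OF independent_simple]
    real_vector.representation_neg[OF independent_simple]
    real_vector.representation_scale[OF independent_simple] by (simp_all add: span_simple)

lemma coef_sum: "coef (sum f I) a = (\<Sum>i\<in>I. coef (f i) a)"
  unfolding root_coeff_def
  by (rule fun_cong[OF real_vector.representation_sum[OF independent_simple]]) (simp add: span_simple)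

lemma coef_simple: "b \<in> \<Delta> \<Longrightarrow> coef b a = (if a = b then 1 else 0)"
  unfolding root_coeff_def using real_vector.representation_basis[OF independent_simple] by simp

lemma coef_expansion: "v = (\<Sum>a\<in>\<Delta>. coef v a *\<^sub>R a)"
  unfolding root_coeff_def
  using real_vector.sum_representation_eq[OF independent_simple _ finite_simple] by (simp add: span_simple)

lemma eq_0_if_coef_0: "(\<And>a. a \<in> \<Delta> \<Longrightarrow> coef v a = 0) \<Longrightarrow> v = 0"
  by (subst coef_expansion) simp

lemma inner_coef_expansion: "x \<bullet> y = (\<Sum>a\<in>\<Delta>. coef x a * (a \<bullet> y))"
  by (subst coef_expansion) (simp add: inner_sum_left)

lemma nonneg_comb_iff: "nonneg_comb \<Delta> v \<longleftrightarrow> (\<forall>a\<in>\<Delta>. coef v a \<in> \<nat>)"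
proof
  assume "nonneg_comb \<Delta> v"
  then obtain c where c: "v = (\<Sum>\<alpha>\<in>\<Delta>. real (c \<alpha>) *\<^sub>R \<alpha>)" unfolding nonneg_comb_def by blast
  show "\<forall>a\<in>\<Delta>. coef v a \<in> \<nat>"
  proof
    fix a assume a: "a \<in> \<Delta>"
    have "coef v a = (\<Sum>\<alpha>\<in>\<Delta>. real (c \<alpha>) * (if a = \<alpha> then 1 else 0))"
      unfolding c coef_sum coef_scale by (intro sum.cong) (auto simp: coef_simple)
    also have "\<dots> = real (c a)" using a finite_simple by (simp add: if_distrib cong: if_cong)
    finally show "coef v a \<in> \<nat>" by simp
  qed
next
  assume "\<forall>a\<in>\<Delta>. coef v a \<in> \<nat>"
  hence "\<forall>a\<in>\<Delta>. \<exists>n. coef v a = real n" by (auto elim: Nats_cases)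
  then obtain c where "\<forall>a\<in>\<Delta>. coef v a = real (c a)" by (auto dest!: bchoice)
  hence "v = (\<Sum>\<alpha>\<in>\<Delta>. real (c \<alpha>) *\<^sub>R \<alpha>)"
    by (subst coef_expansion) (auto intro: sum.cong)
  thus "nonneg_comb \<Delta> v" unfolding nonneg_comb_def by blast
qed

lemma coef_root_int: "\<beta> \<in> \<Phi> \<Longrightarrow> coef \<beta> a \<in> \<int>"
proof (cases "a \<in> \<Delta>")
  case False
  hence "coef \<beta> a = 0"
    unfolding root_coeff_def using real_vector.representation_ne_zero by metis
  thus ?thesis by simp
next
  case True
  assume "\<beta> \<in> \<Phi>"
  from root_sign[OF this] show ?thesis
    using True Nats_subset_Ints by (auto simp: nonneg_comb_iff coef_neg)
qed

lemma uminus_root: "\<beta> \<in> \<Phi> \<Longrightarrow> - \<beta> \<in> \<Phi>"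
  using refl_root[of \<beta> \<beta>] root_nonzero[of \<beta>] by (simp add: refl_def scaleR_2)

lemma pos_root_iff: "\<beta> \<in> pos \<longleftrightarrow> \<beta> \<in> \<Phi> \<and> (\<forall>a\<in>\<Delta>. coef \<beta> a \<ge> 0)"
  unfolding pos_roots_def nonneg_comb_iff using coef_root_int Nats_altdef2 by auto

lemma neg_root_iff: "neg_root \<beta> \<longleftrightarrow> \<beta> \<in> \<Phi> \<and> (\<forall>a\<in>\<Delta>. coef \<beta> a \<le> 0)"
  unfolding neg_root_def pos_root_iff using uminus_root by (force simp: coef_neg)

lemma pos_root_is_root: "\<beta> \<in> pos \<Longrightarrow> \<beta> \<in> \<Phi>"
  by (simp add: pos_root_iff)

lemma finite_pos_roots: "finite pos"
  using finite_roots by (rule finite_subset[rotated]) (auto simp: pos_root_iff)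

lemma coef_nonneg_not_neg_root:
  assumes "\<forall>a\<in>\<Delta>. coef \<beta> a \<ge> 0" shows "\<not> neg_root \<beta>"
proof
  assume neg: "neg_root \<beta>"
  hence "\<beta> = 0" using assms by (intro eq_0_if_coef_0) (force simp: neg_root_iff)
  with neg show False by (auto simp: neg_root_iff zero_not_root)
qed

lemma pos_root_not_neg: "\<beta> \<in> pos \<Longrightarrow> \<not> neg_root \<beta>"
  using coef_nonneg_not_neg_root by (simp add: pos_root_iff)

lemma root_pos_or_neg: "\<beta> \<in> \<Phi> \<Longrightarrow> \<beta> \<in> pos \<or> neg_root \<beta>"
  using root_sign[of \<beta>] uminus_root unfolding neg_root_def pos_roots_def by auto

lemma simple_pos_root: "a \<in> \<Delta> \<Longrightarrow> a \<in> pos"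
  using simple_roots by (auto simp: pos_root_iff coef_simple)

lemma neg_root_uminus_simple: "a \<in> \<Delta> \<Longrightarrow> neg_root (- a)"
  using simple_pos_root by (simp add: neg_root_def)

lemma root_le_iff:
  "\<beta> \<in> \<Phi> \<Longrightarrow> \<gamma> \<in> \<Phi> \<Longrightarrow> root_le \<Delta> \<gamma> \<beta> \<longleftrightarrow> (\<forall>a\<in>\<Delta>. coef \<gamma> a \<le> coef \<beta> a)"
  unfolding root_le_def nonneg_comb_iff coef_diff Nats_altdef2 using coef_root_int by auto

lemma refl_linear: "linear (refl a)"
  unfolding refl_def
  by (intro linearI) (auto simp: algebra_simps inner_add_left add_divide_distrib scaleR_add_left)

lemma refl_inner: "a \<noteq> 0 \<Longrightarrow> refl a x \<bullet> refl a y = x \<bullet> y"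
  unfolding refl_def
  by (simp add: inner_diff_left inner_diff_right inner_commute algebra_simps power2_eq_square divide_simps)

lemma refl_refl: "a \<noteq> 0 \<Longrightarrow> refl a (refl a x) = x"
  unfolding refl_def by (simp add: inner_diff_left algebra_simps divide_simps)

lemma refl_self: "a \<noteq> 0 \<Longrightarrow> refl a a = - a"
  unfolding refl_def by (simp add: scaleR_2)

lemma refl_uminus: "refl (- a) = refl a"
  unfolding refl_def by (auto simp: fun_eq_iff)

lemma coef_refl_simple: "a \<in> \<Delta> \<Longrightarrow> b \<noteq> a \<Longrightarrow> coef (refl a x) b = coef x b"
  unfolding refl_def by (simp add: coef_diff coef_scale coef_simple)

lemma pos_root_other_coef:
  assumes \<rho>: "\<rho> \<in> pos" and \<alpha>: "\<alpha> \<in> \<Delta>" and ne: "\<rho> \<noteq> \<alpha>"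
  shows "\<exists>\<gamma>\<in>\<Delta>. \<gamma> \<noteq> \<alpha> \<and> coef \<rho> \<gamma> > 0"
proof (rule ccontr)
  assume "\<not> ?thesis"
  hence zero: "\<forall>\<gamma>\<in>\<Delta>. \<gamma> \<noteq> \<alpha> \<longrightarrow> coef \<rho> \<gamma> = 0" using \<rho> pos_root_iff by force
  have "\<rho> = coef \<rho> \<alpha> *\<^sub>R \<alpha> + (\<Sum>b\<in>\<Delta>-{\<alpha>}. coef \<rho> b *\<^sub>R b)"
    using coef_expansion[of \<rho>] \<alpha> finite_simple by (simp add: sum.remove)
  also have "(\<Sum>b\<in>\<Delta>-{\<alpha>}. coef \<rho> b *\<^sub>R b) = 0" using zero by (intro sum.neutral) auto
  finally have eq: "\<rho> = coef \<rho> \<alpha> *\<^sub>R \<alpha>" by simp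
  hence "coef \<rho> \<alpha> = 1 \<or> coef \<rho> \<alpha> = -1"
    using root_multiple[of \<alpha> "coef \<rho> \<alpha>"] \<alpha> simple_roots \<rho> pos_root_is_root by auto
  moreover have "coef \<rho> \<alpha> \<ge> 0" using \<rho> \<alpha> pos_root_iff by auto
  ultimately show False using eq ne by auto
qed

text \<open>\<open>s\<^sub>\<alpha>\<close> changes only the \<open>\<alpha>\<close>-coefficient, and some other coefficient of \<open>\<beta>\<close> is positive.\<close>

lemma refl_simple_pos_root:
  assumes \<beta>: "\<beta> \<in> pos" and \<alpha>: "\<alpha> \<in> \<Delta>" and ne: "\<beta> \<noteq> \<alpha>"
  shows "refl \<alpha> \<beta> \<in> pos"
proof -
  obtain \<gamma> where \<gamma>: "\<gamma> \<in> \<Delta>" "\<gamma> \<noteq> \<alpha>" "coef \<beta> \<gamma> > 0"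
    using pos_root_other_coef[OF assms] by blast
  have "refl \<alpha> \<beta> \<in> \<Phi>" using refl_root \<alpha> simple_roots \<beta> pos_root_is_root by blast
  moreover have "\<not> neg_root (refl \<alpha> \<beta>)"
    using \<gamma> \<alpha> by (force simp: neg_root_iff coef_refl_simple)
  ultimately show ?thesis using root_pos_or_neg by blast
qed

lemma root_add_if_inner_neg:
  assumes \<beta>: "\<beta> \<in> \<Phi>" and \<alpha>: "\<alpha> \<in> \<Phi>" and lt: "\<beta> \<bullet> \<alpha> < 0" and ne: "\<beta> \<noteq> - \<alpha>"
  shows "\<beta> + \<alpha> \<in> \<Phi>"
proof -
  have aa: "\<alpha> \<bullet> \<alpha> > 0" and bb: "\<beta> \<bullet> \<beta> > 0" using \<alpha> \<beta> root_nonzero by auto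
  define t where "t = (\<beta> \<bullet> \<alpha>) / (\<alpha> \<bullet> \<alpha>)"
  have "\<beta> - t *\<^sub>R \<alpha> \<noteq> 0"
  proof
    assume "\<beta> - t *\<^sub>R \<alpha> = 0"
    hence eq: "\<beta> = t *\<^sub>R \<alpha>" by simp
    hence "t = 1 \<or> t = -1" using root_multiple[OF \<alpha>] \<beta> by auto
    thus False using eq lt ne by (auto simp flip: not_le)
  qed
  hence "0 < (\<beta> - t *\<^sub>R \<alpha>) \<bullet> (\<beta> - t *\<^sub>R \<alpha>)" by simp
  also have "\<dots> = \<beta> \<bullet> \<beta> - (\<beta> \<bullet> \<alpha>)^2 / (\<alpha> \<bullet> \<alpha>)"
    unfolding t_def using aa
    by (simp add: inner_diff_left inner_diff_right inner_commute power2_eq_square divide_simps)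
  finally have cauchy_schwarz: "(\<beta> \<bullet> \<alpha>)^2 < (\<alpha> \<bullet> \<alpha>) * (\<beta> \<bullet> \<beta>)"
    using aa by (simp add: divide_simps mult.commute)
  define n1 where "n1 = 2 * (\<beta> \<bullet> \<alpha>) / (\<alpha> \<bullet> \<alpha>)"
  define n2 where "n2 = 2 * (\<alpha> \<bullet> \<beta>) / (\<beta> \<bullet> \<beta>)"
  obtain k1 where k1: "n1 = of_int k1" using cartan_int[OF \<alpha> \<beta>] n1_def Ints_cases by metis
  obtain k2 where k2: "n2 = of_int k2" using cartan_int[OF \<beta> \<alpha>] n2_def Ints_cases by metis
  have "n1 < 0" "n2 < 0" using lt aa bb by (simp_all add: n1_def n2_def divide_simps inner_commute)
  moreover have "n1 * n2 < 4"
    using cauchy_schwarz aa bb by (simp add: n1_def n2_def inner_commute divide_simps power2_eq_square)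
  \<comment> \<open>two negative Cartan integers with product below \<open>4\<close>: one is \<open>-1\<close>, and that reflection adds the roots\<close>
  ultimately have k: "k1 < 0" "k2 < 0" "k1 * k2 < 4" using k1 k2 by (simp_all flip: of_int_mult)
  have "k1 = -1 \<or> k2 = -1"
  proof (rule ccontr)
    assume "\<not> (k1 = -1 \<or> k2 = -1)"
    hence "2 * 2 \<le> (- k1) * (- k2)" using k(1,2) by (intro mult_mono) auto
    with k(3) show False by simp
  qed
  hence "refl \<alpha> \<beta> = \<beta> + \<alpha> \<or> refl \<beta> \<alpha> = \<beta> + \<alpha>"
    unfolding refl_def using k1 k2 by (auto simp: n1_def n2_def)
  thus ?thesis using refl_root[OF \<alpha> \<beta>] refl_root[OF \<beta> \<alpha>] by auto
qed

section \<open>Height, irreducibility and the highest root\<close>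

definition height :: "'a \<Rightarrow> real" where "height v = (\<Sum>a\<in>\<Delta>. coef v a)"

lemma height_add: "height (u + v) = height u + height v"
  and height_diff: "height (u - v) = height u - height v"
  and height_scale: "height (c *\<^sub>R v) = c * height v"
  unfolding height_def coef_add coef_diff coef_scale
  by (simp_all add: sum.distrib sum_subtractf sum_distrib_left)

lemma height_simple: "a \<in> \<Delta> \<Longrightarrow> height a = 1"
  unfolding height_def using finite_simple by (simp add: coef_simple)

lemma pos_root_coef_pos: "\<beta> \<in> pos \<Longrightarrow> \<exists>a\<in>\<Delta>. coef \<beta> a > 0"
  using coef_nonneg_not_neg_root[of \<beta>] pos_root_not_neg by (force simp: pos_root_iff neg_root_iff)

lemma height_pos: "\<beta> \<in> pos \<Longrightarrow> height \<beta> > 0"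
  using pos_root_coef_pos[of \<beta>] finite_simple unfolding height_def
  by (auto intro: sum_pos2 simp: pos_root_iff)

lemma height_less_if_coef_le:
  assumes "\<forall>a\<in>\<Delta>. coef \<gamma> a \<le> coef \<beta> a" and "\<gamma> \<noteq> \<beta>"
  shows "height \<gamma> < height \<beta>"
proof -
  obtain a where a: "a \<in> \<Delta>" "coef (\<beta> - \<gamma>) a \<noteq> 0"
    using eq_0_if_coef_0[of "\<beta> - \<gamma>"] assms(2) by auto
  have "height (\<beta> - \<gamma>) > 0"
    unfolding height_def using a assms(1) finite_simple by (intro sum_pos2) (auto simp: coef_diff)
  thus ?thesis by (simp add: height_diff)
qed

lemma pos_root_height_induct[consumes 1, case_names step]:
  assumes "\<beta> \<in> pos"
    and step: "\<And>\<beta>. \<beta> \<in> pos \<Longrightarrow> (\<And>\<gamma>. \<gamma> \<in> pos \<Longrightarrow> height \<gamma> < height \<beta> \<Longrightarrow> P \<gamma>) \<Longrightarrow> P \<beta>"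
  shows "P \<beta>"
proof -
  have height_int: "height \<gamma> = of_int \<lfloor>height \<gamma>\<rfloor>" if "\<gamma> \<in> pos" for \<gamma>
    using that coef_root_int pos_root_is_root unfolding height_def
    by (metis Ints_sum floor_of_int Ints_cases)
  show ?thesis using assms(1)
  proof (induction "nat \<lfloor>height \<beta>\<rfloor>" arbitrary: \<beta> rule: less_induct)
    case less
    show ?case
    proof (rule step[OF less.prems])
      fix \<gamma> assume \<gamma>: "\<gamma> \<in> pos" "height \<gamma> < height \<beta>"
      have "nat \<lfloor>height \<gamma>\<rfloor> < nat \<lfloor>height \<beta>\<rfloor>"
        using \<gamma> height_int[OF \<gamma>(1)] height_int[OF less.prems] height_pos[OF \<gamma>(1)] by linarith
      thus "P \<gamma>" using less.hyps \<gamma> by blast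
    qed
  qed
qed

lemma pos_root_inner_simple_pos: "\<rho> \<in> pos \<Longrightarrow> \<exists>\<alpha>\<in>\<Delta>. \<rho> \<bullet> \<alpha> > 0"
proof (rule ccontr)
  assume \<rho>: "\<rho> \<in> pos" and "\<not> (\<exists>\<alpha>\<in>\<Delta>. \<rho> \<bullet> \<alpha> > 0)"
  hence "\<rho> \<bullet> \<rho> \<le> 0"
    unfolding inner_coef_expansion[of \<rho> \<rho>]
    by (intro sum_nonpos) (auto simp: pos_root_iff inner_commute mult_nonneg_nonpos)
  with \<rho> show False using root_nonzero pos_root_is_root by (metis inner_gt_zero_iff not_le)
qed

lemma pos_root_minus_simple:
  assumes \<rho>: "\<rho> \<in> pos" and "\<rho> \<notin> \<Delta>"
  shows "\<exists>\<alpha>\<in>\<Delta>. \<rho> - \<alpha> \<in> pos"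
proof -
  obtain \<alpha> where \<alpha>: "\<alpha> \<in> \<Delta>" "\<rho> \<bullet> \<alpha> > 0" using pos_root_inner_simple_pos[OF \<rho>] by blast
  have ne: "\<rho> \<noteq> \<alpha>" using \<alpha> assms(2) by auto
  have "\<rho> + - \<alpha> \<in> \<Phi>"
    using root_add_if_inner_neg[of \<rho> "-\<alpha>"] \<rho> pos_root_is_root \<alpha> simple_roots uminus_root ne by auto
  moreover obtain \<gamma> where "\<gamma> \<in> \<Delta>" "\<gamma> \<noteq> \<alpha>" "coef \<rho> \<gamma> > 0"
    using pos_root_other_coef[OF \<rho> \<alpha>(1) ne] by blast
  hence "\<not> neg_root (\<rho> - \<alpha>)" using \<alpha> by (force simp: neg_root_iff coef_diff coef_simple)
  ultimately show ?thesis using root_pos_or_neg \<alpha> by auto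
qed

lemma simple_inner_nonpos:
  assumes \<alpha>: "\<alpha> \<in> \<Delta>" and \<gamma>: "\<gamma> \<in> \<Delta>" and ne: "\<alpha> \<noteq> \<gamma>"
  shows "\<alpha> \<bullet> \<gamma> \<le> 0"
proof (rule ccontr)
  assume "\<not> \<alpha> \<bullet> \<gamma> \<le> 0"
  hence "\<alpha> + - \<gamma> \<in> \<Phi>"
    using root_add_if_inner_neg[of \<alpha> "-\<gamma>"] assms simple_roots uminus_root by auto
  moreover have "coef (\<alpha> - \<gamma>) \<alpha> = 1" "coef (\<alpha> - \<gamma>) \<gamma> = -1"
    using assms by (auto simp: coef_diff coef_simple)
  ultimately show False
    using root_pos_or_neg[of "\<alpha> - \<gamma>"] assms by (force simp: pos_root_iff neg_root_iff)
qed

lemma maximal_root_inner_nonneg: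
  assumes \<theta>: "\<theta> \<in> pos" and max: "\<forall>\<alpha>\<in>\<Delta>. \<theta> + \<alpha> \<notin> \<Phi>" and \<alpha>: "\<alpha> \<in> \<Delta>"
  shows "\<theta> \<bullet> \<alpha> \<ge> 0"
proof (rule ccontr)
  have "\<theta> \<noteq> - \<alpha>" using \<theta> pos_root_not_neg neg_root_uminus_simple[OF \<alpha>] by auto
  moreover assume "\<not> \<theta> \<bullet> \<alpha> \<ge> 0"
  ultimately have "\<theta> + \<alpha> \<in> \<Phi>"
    using root_add_if_inner_neg[of \<theta> \<alpha>] \<theta> pos_root_is_root \<alpha> simple_roots by auto
  with max \<alpha> show False by blast
qed

lemma inner_eq_0_if_support_orthogonal:
  assumes "\<forall>\<delta>\<in>\<Delta>-L. coef x \<delta> = 0" and "\<forall>\<gamma>\<in>L. \<forall>\<delta>\<in>\<Delta>-L. \<gamma> \<bullet> \<delta> = 0" and "\<alpha> \<in> \<Delta> - L"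
  shows "x \<bullet> \<alpha> = 0"
  unfolding inner_coef_expansion[of x \<alpha>] using assms by (intro sum.neutral) auto

lemma root_add_orthogonal_simple:
  assumes \<rho>: "\<rho> \<in> pos" and \<alpha>: "\<alpha> \<in> \<Delta>" and orth: "\<rho> \<bullet> \<alpha> = 0" and zero: "coef \<rho> \<alpha> = 0"
  shows "\<rho> + \<alpha> \<notin> \<Phi>"
proof
  assume sum: "\<rho> + \<alpha> \<in> \<Phi>"
  have "refl \<alpha> (\<rho> + \<alpha>) = \<rho> - \<alpha>"
    unfolding refl_def using orth \<alpha> simple_roots root_nonzero by (auto simp: inner_add_left scaleR_2)
  hence root: "\<rho> - \<alpha> \<in> \<Phi>" using refl_root[OF _ sum] \<alpha> simple_roots by fastforce
  have "\<rho> - \<alpha> \<notin> pos" using zero \<alpha> by (force simp: pos_root_iff coef_diff coef_simple)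
  moreover have "\<rho> \<noteq> \<alpha>" using zero \<alpha> by (auto simp: coef_simple)
  then obtain \<gamma> where "\<gamma> \<in> \<Delta>" "\<gamma> \<noteq> \<alpha>" "coef \<rho> \<gamma> > 0" using pos_root_other_coef[OF \<rho> \<alpha>] by blast
  hence "\<not> neg_root (\<rho> - \<alpha>)" using \<alpha> by (force simp: neg_root_iff coef_diff coef_simple)
  ultimately show False using root_pos_or_neg[OF root] by blast
qed

text \<open>If the simple roots split into mutually orthogonal parts \<open>K\<close> and \<open>\<Delta> - K\<close>, every positive
  root is supported on one part: building it up by adding simple roots one at a time, a simple
  root orthogonal to the current support can never be added.\<close>

lemma pos_root_support_split:
  assumes K: "K \<subseteq> \<Delta>" and orth: "\<forall>\<gamma>\<in>K. \<forall>\<delta>\<in>\<Delta>-K. \<gamma> \<bullet> \<delta> = 0" and \<beta>: "\<beta> \<in> pos"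
  shows "\<exists>L\<in>{K, \<Delta> - K}. \<forall>\<delta>\<in>\<Delta>-L. coef \<beta> \<delta> = 0"
  using \<beta>
proof (induction \<beta> rule: pos_root_height_induct)
  case (step \<rho>)
  show ?case
  proof (cases "\<rho> \<in> \<Delta>")
    case True
    thus ?thesis by (cases "\<rho> \<in> K") (auto simp: coef_simple)
  next
    case False
    then obtain \<alpha> where \<alpha>: "\<alpha> \<in> \<Delta>" "\<rho> - \<alpha> \<in> pos" using pos_root_minus_simple[OF step.hyps] by blast
    have "height (\<rho> - \<alpha>) < height \<rho>" using \<alpha> by (simp add: height_diff height_simple)
    then obtain L where L: "L \<in> {K, \<Delta> - K}" and zero: "\<forall>\<delta>\<in>\<Delta>-L. coef (\<rho> - \<alpha>) \<delta> = 0"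
      using step.IH \<alpha> by blast
    have orth_L: "\<forall>\<gamma>\<in>L. \<forall>\<delta>\<in>\<Delta>-L. \<gamma> \<bullet> \<delta> = 0"
      using L orth K by (auto simp: Diff_Diff_Int Int_absorb1) (metis Diff_iff inner_commute)
    have "\<alpha> \<in> L"
    proof (rule ccontr)
      assume "\<alpha> \<notin> L"
      hence "(\<rho> - \<alpha>) + \<alpha> \<notin> \<Phi>"
        using \<alpha> zero inner_eq_0_if_support_orthogonal[OF zero orth_L]
        by (intro root_add_orthogonal_simple) auto
      with step.hyps pos_root_is_root show False by simp
    qed
    hence "\<forall>\<delta>\<in>\<Delta>-L. coef \<rho> \<delta> = 0" using zero \<alpha> by (auto simp: coef_diff coef_simple)
    thus ?thesis using L by blast
  qed
qed

lemma not_irreducible_if_simple_split: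
  assumes K: "K \<subseteq> \<Delta>" "K \<noteq> {}" "\<Delta> - K \<noteq> {}" and orth: "\<forall>\<gamma>\<in>K. \<forall>\<delta>\<in>\<Delta>-K. \<gamma> \<bullet> \<delta> = 0"
  shows "\<not> irreducible_root_system \<Phi>"
proof -
  define A where "A = {\<beta>\<in>\<Phi>. \<forall>\<delta>\<in>\<Delta>-K. coef \<beta> \<delta> = 0}"
  define B where "B = {\<beta>\<in>\<Phi>. \<forall>\<delta>\<in>\<Delta>-(\<Delta>-K). coef \<beta> \<delta> = 0}"
  have "\<beta> \<in> A \<union> B" if "\<beta> \<in> pos" for \<beta>
    using pos_root_support_split[OF K(1) orth that] that pos_root_is_root unfolding A_def B_def by auto
  hence "\<Phi> \<subseteq> A \<union> B"
    using root_pos_or_neg by (fastforce simp: neg_root_def A_def B_def coef_neg)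
  hence "A \<union> B = \<Phi>" by (auto simp: A_def B_def)
  moreover obtain k d where "k \<in> K" "d \<in> \<Delta> - K" using K by blast
  hence "k \<in> A" "d \<in> B" using K(1) simple_roots by (auto simp: A_def B_def coef_simple)
  moreover have "x \<bullet> y = 0" if "x \<in> A" "y \<in> B" for x y
  proof -
    have orth': "\<forall>\<gamma>\<in>\<Delta>-K. \<forall>\<delta>\<in>\<Delta>-(\<Delta>-K). \<gamma> \<bullet> \<delta> = 0"
      using orth K(1) by (auto simp: Diff_Diff_Int Int_absorb1) (metis Diff_iff inner_commute)
    have "y \<bullet> g = 0" if "g \<in> K" for g
      using \<open>y \<in> B\<close> orth' that K(1) by (intro inner_eq_0_if_support_orthogonal) (auto simp: B_def)
    hence "\<forall>g\<in>K. g \<bullet> y = 0" by (simp add: inner_commute)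
    thus ?thesis
      unfolding inner_coef_expansion[of x y] using \<open>x \<in> A\<close> by (intro sum.neutral) (auto simp: A_def)
  qed
  ultimately show ?thesis unfolding irreducible_root_system_def by (metis empty_iff)
qed

text \<open>The support \<open>K\<close> of a maximal positive root \<open>\<theta>\<close> is orthogonal to \<open>\<Delta> - K\<close>: for \<open>\<delta> \<notin> K\<close> every
  term of \<open>\<theta> \<bullet> \<delta> = \<Sum>\<gamma>. c\<^sub>\<gamma> (\<gamma> \<bullet> \<delta>)\<close> is nonpositive while the sum is nonnegative, so all terms
  vanish. Irreducibility then forces \<open>K = \<Delta>\<close>.\<close>

lemma maximal_root_coef_pos:
  assumes irr: "irreducible_root_system \<Phi>" and \<theta>: "\<theta> \<in> pos" and max: "\<forall>\<alpha>\<in>\<Delta>. \<theta> + \<alpha> \<notin> \<Phi>"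
    and \<alpha>: "\<alpha> \<in> \<Delta>"
  shows "coef \<theta> \<alpha> > 0"
proof (rule ccontr)
  define K where "K = {a\<in>\<Delta>. coef \<theta> a \<noteq> 0}"
  have coef_nonneg: "0 \<le> coef \<theta> a" if "a \<in> \<Delta>" for a using \<theta> that by (simp add: pos_root_iff)
  assume "\<not> coef \<theta> \<alpha> > 0"
  hence "\<alpha> \<in> \<Delta> - K" using coef_nonneg[OF \<alpha>] \<alpha> by (simp add: K_def)
  moreover have "K \<noteq> {}" using pos_root_coef_pos[OF \<theta>] unfolding K_def by fastforce
  moreover have "\<gamma> \<bullet> \<delta> = 0" if \<gamma>: "\<gamma> \<in> K" and \<delta>: "\<delta> \<in> \<Delta> - K" for \<gamma> \<delta>
  proof -
    have terms: "coef \<theta> g * (g \<bullet> \<delta>) \<le> 0" if g: "g \<in> \<Delta>" for g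
    proof (cases "g = \<delta>")
      case True
      thus ?thesis using \<delta> by (simp add: K_def)
    next
      case False
      thus ?thesis using simple_inner_nonpos[OF g _ False] \<delta> coef_nonneg[OF g]
        by (simp add: mult_nonneg_nonpos)
    qed
    have "0 \<le> \<theta> \<bullet> \<delta>" using maximal_root_inner_nonneg[OF \<theta> max] \<delta> by blast
    also have "\<theta> \<bullet> \<delta> = (\<Sum>g\<in>\<Delta>. coef \<theta> g * (g \<bullet> \<delta>))" by (rule inner_coef_expansion)
    finally have "0 \<le> (\<Sum>g\<in>\<Delta>. coef \<theta> g * (g \<bullet> \<delta>))" .
    moreover have "(\<Sum>g\<in>\<Delta>. coef \<theta> g * (g \<bullet> \<delta>)) \<le> 0" using terms by (rule sum_nonpos)
    ultimately have "(\<Sum>g\<in>\<Delta>. - (coef \<theta> g * (g \<bullet> \<delta>))) = 0" by (simp add: sum_negf)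
    hence "\<forall>g\<in>\<Delta>. coef \<theta> g * (g \<bullet> \<delta>) = 0"
      using sum_nonneg_eq_0_iff[OF finite_simple, of "\<lambda>g. - (coef \<theta> g * (g \<bullet> \<delta>))"] terms
      by simp
    thus ?thesis using \<gamma> by (auto simp: K_def)
  qed
  moreover have "K \<subseteq> \<Delta>" by (simp add: K_def)
  ultimately show False using not_irreducible_if_simple_split[of K] irr by blast
qed

lemma simple_roots_nonempty: "\<Delta> \<noteq> {}"
proof
  assume "\<Delta> = {}"
  hence "span \<Delta> = {0}" by simp
  moreover obtain b :: 'a where "b \<in> Basis" using nonempty_Basis by blast
  ultimately show False using span_simple nonzero_Basis by auto
qed

lemma pos_root_add_simple: "\<theta> \<in> pos \<Longrightarrow> \<alpha> \<in> \<Delta> \<Longrightarrow> \<theta> + \<alpha> \<in> \<Phi> \<Longrightarrow> \<theta> + \<alpha> \<in> pos"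
  using simple_pos_root[of \<alpha>] by (auto simp: pos_root_iff coef_add)

lemma maximal_if_max_height:
  assumes "\<forall>y\<in>S. height y \<le> height \<theta>" and "\<forall>\<alpha>\<in>\<Delta>. \<theta> + \<alpha> \<in> pos \<longrightarrow> \<theta> + \<alpha> \<in> S"
    and "\<theta> \<in> pos"
  shows "\<forall>\<alpha>\<in>\<Delta>. \<theta> + \<alpha> \<notin> \<Phi>"
  using assms pos_root_add_simple by (fastforce simp: height_add height_simple)

lemma maximal_root_above:
  assumes \<beta>: "\<beta> \<in> pos"
  shows "\<exists>\<theta>\<in>pos. root_le \<Delta> \<beta> \<theta> \<and> (\<forall>\<alpha>\<in>\<Delta>. \<theta> + \<alpha> \<notin> \<Phi>)"
proof -
  define S where "S = {\<gamma>\<in>pos. root_le \<Delta> \<beta> \<gamma>}"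
  have "\<beta> \<in> S" using \<beta> pos_root_is_root by (auto simp: S_def root_le_iff)
  then obtain \<theta> where \<theta>: "\<theta> \<in> S" "\<forall>y\<in>S. height y \<le> height \<theta>"
    using finite_ex_max_image[of S height] finite_pos_roots by (auto simp: S_def)
  have "\<forall>\<alpha>\<in>\<Delta>. \<theta> + \<alpha> \<in> pos \<longrightarrow> \<theta> + \<alpha> \<in> S"
    using \<theta>(1) \<beta> simple_pos_root by (auto simp: S_def root_le_iff pos_root_iff coef_add add_increasing2)
  with \<theta> show ?thesis using maximal_if_max_height[where S=S and \<theta>=\<theta>] by (auto simp: S_def)
qed

text \<open>In an irreducible system the positive root of greatest height dominates every maximal
  positive root \<open>\<theta>'\<close>: both have full support, so \<open>\<theta> \<bullet> \<theta>' > 0\<close> and \<open>\<theta> - \<theta>'\<close> is a root or zero, and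
  it cannot be negative.\<close>

lemma maximal_root_le_max_height:
  assumes irr: "irreducible_root_system \<Phi>"
    and \<theta>: "\<theta> \<in> pos" "\<forall>y\<in>pos. height y \<le> height \<theta>"
    and \<theta>': "\<theta>' \<in> pos" "\<forall>\<alpha>\<in>\<Delta>. \<theta>' + \<alpha> \<notin> \<Phi>"
  shows "root_le \<Delta> \<theta>' \<theta>"
proof (cases "\<theta> = \<theta>'")
  case True
  thus ?thesis using \<theta> pos_root_is_root by (simp add: root_le_iff)
next
  case False
  have max: "\<forall>\<alpha>\<in>\<Delta>. \<theta> + \<alpha> \<notin> \<Phi>" using maximal_if_max_height[where S=pos and \<theta>=\<theta>] \<theta> by blast
  obtain a0 where a0: "a0 \<in> \<Delta>" "\<theta> \<bullet> a0 > 0" using pos_root_inner_simple_pos[OF \<theta>(1)] by blast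
  have "\<theta>' \<bullet> \<theta> > 0"
    unfolding inner_coef_expansion[of \<theta>' \<theta>]
  proof (rule sum_pos2[OF finite_simple a0(1)])
    show "0 < coef \<theta>' a0 * (a0 \<bullet> \<theta>)"
      using maximal_root_coef_pos[OF irr \<theta>' a0(1)] a0 by (simp add: inner_commute)
    show "0 \<le> coef \<theta>' a * (a \<bullet> \<theta>)" if "a \<in> \<Delta>" for a
      using maximal_root_coef_pos[OF irr \<theta>' that] maximal_root_inner_nonneg[OF \<theta>(1) max that]
      by (simp add: inner_commute)
  qed
  hence "\<theta> + - \<theta>' \<in> \<Phi>"
    using root_add_if_inner_neg[of \<theta> "- \<theta>'"] \<theta> \<theta>' False pos_root_is_root uminus_root
    by (auto simp: inner_commute)
  hence "\<theta> - \<theta>' \<in> pos \<or> neg_root (\<theta> - \<theta>')" using root_pos_or_neg by simp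
  moreover have "\<not> neg_root (\<theta> - \<theta>')"
    using height_pos[of "\<theta>' - \<theta>"] \<theta> \<theta>' by (force simp: neg_root_def height_diff)
  ultimately show ?thesis
    using \<theta> \<theta>' pos_root_is_root by (auto simp: root_le_iff pos_root_iff coef_diff)
qed

lemma highest_root:
  assumes irr: "irreducible_root_system \<Phi>"
  shows "highest_root \<Phi> \<Delta> \<in> pos" and "\<beta> \<in> pos \<Longrightarrow> root_le \<Delta> \<beta> (highest_root \<Phi> \<Delta>)"
proof -
  obtain \<theta> where \<theta>: "\<theta> \<in> pos" "\<forall>y\<in>pos. height y \<le> height \<theta>"
    using finite_ex_max_image[OF finite_pos_roots, of height] simple_roots_nonempty simple_pos_root
    by blast
  have above: "root_le \<Delta> \<beta> \<theta>" if \<beta>: "\<beta> \<in> pos" for \<beta>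
  proof -
    obtain \<theta>' where "\<theta>' \<in> pos" "root_le \<Delta> \<beta> \<theta>'" "\<forall>\<alpha>\<in>\<Delta>. \<theta>' + \<alpha> \<notin> \<Phi>"
      using maximal_root_above[OF \<beta>] by blast
    thus ?thesis using maximal_root_le_max_height[OF irr \<theta>] \<beta> \<theta>(1) pos_root_is_root
      by (fastforce simp: root_le_iff)
  qed
  have "highest_root \<Phi> \<Delta> = \<theta>"
    unfolding highest_root_def
  proof (rule the_equality)
    fix t assume t: "t \<in> pos \<and> (\<forall>\<beta>\<in>pos. root_le \<Delta> \<beta> t)"
    hence "\<forall>a\<in>\<Delta>. coef (t - \<theta>) a = 0"
      using above \<theta>(1) pos_root_is_root by (force simp: root_le_iff coef_diff)
    thus "t = \<theta>" using eq_0_if_coef_0[of "t - \<theta>"] by simp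
  qed (use \<theta> above in blast)
  thus "highest_root \<Phi> \<Delta> \<in> pos" and "\<beta> \<in> pos \<Longrightarrow> root_le \<Delta> \<beta> (highest_root \<Phi> \<Delta>)"
    using \<theta> above by auto
qed

lemma coef_le_highest_root:
  assumes "irreducible_root_system \<Phi>" and "\<beta> \<in> pos" and "a \<in> \<Delta>"
  shows "coef \<beta> a \<le> coef (highest_root \<Phi> \<Delta>) a"
  using highest_root[OF assms(1)] assms(2,3) pos_root_is_root by (auto simp: root_le_iff)

section \<open>The Weyl group is generated by the simple reflections\<close>

lemma refl_word_Nil [simp]: "refl_word [] = id"
  and refl_word_Cons [simp]: "refl_word (a # ws) = refl a \<circ> refl_word ws"
  unfolding refl_word_def by simp_all

lemma refl_word_append: "refl_word (xs @ ys) = refl_word xs \<circ> refl_word ys"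
  by (induction xs) auto

lemma linear_refl_word: "linear (refl_word ws)"
proof (induction ws)
  case Nil
  show ?case using linear_id by (simp add: id_def)
next
  case (Cons a ws)
  show ?case using linear_compose[OF Cons.IH refl_linear] by (simp add: comp_def)
qed

lemma inner_refl_word: "set ws \<subseteq> \<Phi> \<Longrightarrow> refl_word ws x \<bullet> refl_word ws y = x \<bullet> y"
  by (induction ws) (auto simp: refl_inner root_nonzero)

lemma refl_word_root: "set ws \<subseteq> \<Phi> \<Longrightarrow> \<beta> \<in> \<Phi> \<Longrightarrow> refl_word ws \<beta> \<in> \<Phi>"
  by (induction ws) (auto intro: refl_root)

abbreviation W :: "('a \<Rightarrow> 'a) set" where "W \<equiv> weyl_group \<Phi>"

lemma weyl_group_iff: "w \<in> W \<longleftrightarrow> (\<exists>ws. set ws \<subseteq> \<Phi> \<and> w = refl_word ws)"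
  unfolding weyl_group_def by auto

lemma weyl_linear: "w \<in> W \<Longrightarrow> linear w"
  and weyl_inner: "w \<in> W \<Longrightarrow> w x \<bullet> w y = x \<bullet> y"
  and weyl_root: "w \<in> W \<Longrightarrow> \<beta> \<in> \<Phi> \<Longrightarrow> w \<beta> \<in> \<Phi>"
  using linear_refl_word inner_refl_word refl_word_root by (auto simp: weyl_group_iff)

lemma weyl_inj: "w \<in> W \<Longrightarrow> inj w"
proof (rule injI)
  fix x y assume w: "w \<in> W" and "w x = w y"
  hence "w (x - y) = 0" using weyl_linear[OF w] by (simp add: linear_diff)
  hence "(x - y) \<bullet> (x - y) = 0" using weyl_inner[OF w, of "x - y" "x - y"] by simp
  thus "x = y" by simp
qed

lemma weyl_image_roots: "w \<in> W \<Longrightarrow> w ` \<Phi> = \<Phi>"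
  using finite_roots weyl_root weyl_inj
  by (intro endo_inj_surj) (auto simp: inj_on_def inj_def)

lemma weyl_refl_comp: "\<alpha> \<in> \<Phi> \<Longrightarrow> w \<in> W \<Longrightarrow> refl \<alpha> \<circ> w \<in> W"
  unfolding weyl_group_iff by (metis refl_word_Cons insert_subset list.set(2))

lemma weyl_comp_refl:
  assumes "\<alpha> \<in> \<Phi>" and "w \<in> W"
  shows "w \<circ> refl \<alpha> \<in> W"
proof -
  obtain ws where "set ws \<subseteq> \<Phi>" "w = refl_word ws" using assms(2) by (auto simp: weyl_group_iff)
  hence "set (ws @ [\<alpha>]) \<subseteq> \<Phi>" "w \<circ> refl \<alpha> = refl_word (ws @ [\<alpha>])"
    using assms(1) by (auto simp: refl_word_append)
  thus ?thesis unfolding weyl_group_iff by blast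
qed

lemma refl_conj_weyl:
  assumes w: "w \<in> W" and "\<alpha> \<noteq> 0"
  shows "refl (w \<alpha>) \<circ> w = w \<circ> refl \<alpha>"
proof
  fix x
  show "(refl (w \<alpha>) \<circ> w) x = (w \<circ> refl \<alpha>) x"
    unfolding refl_def o_def using weyl_inner[OF w] weyl_linear[OF w]
    by (simp add: linear_diff linear_scale)
qed

definition W_simple :: "('a \<Rightarrow> 'a) set" where
  "W_simple = {refl_word ws | ws. set ws \<subseteq> \<Delta>}"

lemma W_simple_comp: "u \<in> W_simple \<Longrightarrow> v \<in> W_simple \<Longrightarrow> u \<circ> v \<in> W_simple"
  unfolding W_simple_def by (auto simp flip: refl_word_append) (metis Un_subset_iff set_append)

lemma refl_simple_in_W_simple: "\<alpha> \<in> \<Delta> \<Longrightarrow> refl \<alpha> \<in> W_simple"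
  unfolding W_simple_def by (auto intro!: exI[of _ "[\<alpha>]"])

text \<open>Reflecting a non-simple positive root \<open>\<beta>\<close> in a simple root \<open>\<alpha>\<close> with \<open>\<beta> \<bullet> \<alpha> > 0\<close> lowers its
  height, and \<open>s\<^sub>\<beta> = s\<^sub>\<alpha> s\<^sub>\<beta>\<^sub>' s\<^sub>\<alpha>\<close> for \<open>\<beta>' = s\<^sub>\<alpha> \<beta>\<close>.\<close>

lemma refl_pos_root_in_W_simple: "\<beta> \<in> pos \<Longrightarrow> refl \<beta> \<in> W_simple"
proof (induction \<beta> rule: pos_root_height_induct)
  case (step \<beta>)
  show ?case
  proof (cases "\<beta> \<in> \<Delta>")
    case True
    thus ?thesis by (rule refl_simple_in_W_simple)
  next
    case False
    obtain \<alpha> where \<alpha>: "\<alpha> \<in> \<Delta>" "\<beta> \<bullet> \<alpha> > 0" using pos_root_inner_simple_pos[OF step.hyps] by blast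
    have \<alpha>0: "\<alpha> \<noteq> 0" using \<alpha>(1) simple_roots root_nonzero by auto
    define \<beta>' where "\<beta>' = refl \<alpha> \<beta>"
    have \<beta>': "\<beta>' \<in> pos"
      unfolding \<beta>'_def using False \<alpha>(1) by (intro refl_simple_pos_root[OF step.hyps]) auto
    have "height \<beta>' = height \<beta> - 2 * (\<beta> \<bullet> \<alpha>) / (\<alpha> \<bullet> \<alpha>)"
      unfolding \<beta>'_def refl_def using \<alpha> by (simp add: height_diff height_scale height_simple)
    also have "\<dots> < height \<beta>" using \<alpha>(2) \<alpha>0 by simp
    finally have IH: "refl \<beta>' \<in> W_simple" using step.IH \<beta>' by blast
    have "refl \<alpha> \<in> W" using \<alpha>(1) simple_roots by (auto simp: weyl_group_iff intro!: exI[of _ "[\<alpha>]"])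
    hence conj: "refl \<beta> \<circ> refl \<alpha> = refl \<alpha> \<circ> refl \<beta>'"
      using refl_conj_weyl[of "refl \<alpha>" \<beta>'] \<beta>' pos_root_is_root root_nonzero
      by (simp add: \<beta>'_def refl_refl[OF \<alpha>0])
    have "refl \<beta> = refl \<beta> \<circ> refl \<alpha> \<circ> refl \<alpha>" by (simp add: fun_eq_iff refl_refl[OF \<alpha>0])
    also have "\<dots> = refl \<alpha> \<circ> refl \<beta>' \<circ> refl \<alpha>" by (simp only: conj)
    finally have "refl \<beta> = refl \<alpha> \<circ> refl \<beta>' \<circ> refl \<alpha>" .
    thus ?thesis
      using W_simple_comp[OF W_simple_comp[OF refl_simple_in_W_simple[OF \<alpha>(1)] IH]
          refl_simple_in_W_simple[OF \<alpha>(1)]] by (simp only:)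
  qed
qed

theorem weyl_group_eq_W_simple: "W = W_simple"
proof
  show "W_simple \<subseteq> W"
    unfolding W_simple_def weyl_group_def using simple_roots by blast
  have "refl_word ws \<in> W_simple" if "set ws \<subseteq> \<Phi>" for ws
    using that
  proof (induction ws)
    case Nil
    show ?case unfolding W_simple_def by (auto intro!: exI[of _ "[]"])
  next
    case (Cons a ws)
    have "a \<in> pos \<or> - a \<in> pos" using root_pos_or_neg[of a] Cons.prems by (auto simp: neg_root_def)
    hence "refl a \<in> W_simple" using refl_pos_root_in_W_simple refl_uminus[of a] by metis
    thus ?case using Cons W_simple_comp[of "refl a" "refl_word ws"]
      by (simp only: refl_word_Cons set_simps insert_subset)
  qed
  thus "W \<subseteq> W_simple" by (auto simp: weyl_group_iff)
qed

lemma weyl_group_iff_simple_word: "w \<in> W \<longleftrightarrow> (\<exists>ws. set ws \<subseteq> \<Delta> \<and> refl_word ws = w)"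
  unfolding weyl_group_eq_W_simple W_simple_def by auto

section \<open>Inversion sets, length and descents\<close>

abbreviation invs :: "('a \<Rightarrow> 'a) \<Rightarrow> 'a set" where "invs w \<equiv> inv_set \<Phi> \<Delta> w"

lemma inv_set_iff: "\<beta> \<in> invs w \<longleftrightarrow> \<beta> \<in> pos \<and> neg_root (w \<beta>)"
  unfolding inv_set_def neg_root_def by (auto simp: image_iff) (metis minus_minus)

lemma finite_inv_set: "finite (invs w)"
  using finite_pos_roots by (rule finite_subset[rotated]) (auto simp: inv_set_iff)

lemma inv_set_id: "invs id = {}"
  using pos_root_not_neg by (auto simp: inv_set_iff)

lemma weyl_root_pos_or_neg: "w \<in> W \<Longrightarrow> \<beta> \<in> \<Phi> \<Longrightarrow> w \<beta> \<in> pos \<or> neg_root (w \<beta>)"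
  using root_pos_or_neg weyl_root by blast

lemma inv_set_comp_refl_simple:
  assumes w: "w \<in> W" and \<alpha>: "\<alpha> \<in> \<Delta>" and pos: "w \<alpha> \<in> pos"
  shows "invs (w \<circ> refl \<alpha>) = insert \<alpha> (refl \<alpha> ` invs w)"
proof (intro set_eqI iffI)
  have \<alpha>0: "\<alpha> \<noteq> 0" using \<alpha> simple_roots root_nonzero by auto
  fix \<beta>
  {
    assume \<beta>: "\<beta> \<in> invs (w \<circ> refl \<alpha>)"
    show "\<beta> \<in> insert \<alpha> (refl \<alpha> ` invs w)"
    proof (cases "\<beta> = \<alpha>")
      case False
      hence "refl \<alpha> \<beta> \<in> invs w"
        using refl_simple_pos_root[OF _ \<alpha>] \<beta> by (auto simp: inv_set_iff)
      thus ?thesis using refl_refl[OF \<alpha>0, of \<beta>] by (metis image_eqI insertCI)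
    qed simp
  next
    assume \<beta>: "\<beta> \<in> insert \<alpha> (refl \<alpha> ` invs w)"
    show "\<beta> \<in> invs (w \<circ> refl \<alpha>)"
    proof (cases "\<beta> = \<alpha>")
      case True
      have "w (refl \<alpha> \<alpha>) = - w \<alpha>"
        using refl_self[OF \<alpha>0] linear_neg[OF weyl_linear[OF w]] by simp
      thus ?thesis using True pos simple_pos_root[OF \<alpha>] by (simp add: inv_set_iff neg_root_def)
    next
      case False
      then obtain \<gamma> where \<gamma>: "\<gamma> \<in> invs w" "\<beta> = refl \<alpha> \<gamma>" using \<beta> by auto
      have "\<gamma> \<noteq> \<alpha>" using \<gamma> pos pos_root_not_neg by (auto simp: inv_set_iff)
      hence "\<beta> \<in> pos" using refl_simple_pos_root[OF _ \<alpha>] \<gamma> by (auto simp: inv_set_iff)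
      thus ?thesis using \<gamma> by (simp add: inv_set_iff refl_refl[OF \<alpha>0])
    qed
  }
qed

lemma card_inv_set_comp_refl_pos:
  assumes w: "w \<in> W" and \<alpha>: "\<alpha> \<in> \<Delta>" and pos: "w \<alpha> \<in> pos"
  shows "card (invs (w \<circ> refl \<alpha>)) = card (invs w) + 1"
proof -
  have \<alpha>0: "\<alpha> \<noteq> 0" using \<alpha> simple_roots root_nonzero by auto
  have "\<alpha> \<notin> refl \<alpha> ` invs w"
  proof
    assume "\<alpha> \<in> refl \<alpha> ` invs w"
    then obtain \<gamma> where "\<gamma> \<in> invs w" "\<alpha> = refl \<alpha> \<gamma>" by auto
    hence "- \<alpha> \<in> pos" using refl_refl[OF \<alpha>0, of \<gamma>] refl_self[OF \<alpha>0] by (auto simp: inv_set_iff)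
    thus False using simple_pos_root[OF \<alpha>] pos_root_not_neg by (auto simp: neg_root_def)
  qed
  moreover have "card (refl \<alpha> ` invs w) = card (invs w)"
    by (rule card_image) (metis inj_onI refl_refl[OF \<alpha>0])
  ultimately show ?thesis
    unfolding inv_set_comp_refl_simple[OF assms] using finite_inv_set by simp
qed

lemma card_inv_set_comp_refl_neg:
  assumes w: "w \<in> W" and \<alpha>: "\<alpha> \<in> \<Delta>" and neg: "neg_root (w \<alpha>)"
  shows "card (invs w) = card (invs (w \<circ> refl \<alpha>)) + 1"
proof -
  have \<alpha>0: "\<alpha> \<noteq> 0" using \<alpha> simple_roots root_nonzero by auto
  have w': "w \<circ> refl \<alpha> \<in> W" using weyl_comp_refl \<alpha> simple_roots w by auto
  have "(w \<circ> refl \<alpha>) \<alpha> = - w \<alpha>" using refl_self[OF \<alpha>0] linear_neg[OF weyl_linear[OF w]] by simp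
  hence "(w \<circ> refl \<alpha>) \<alpha> \<in> pos" using neg by (simp add: neg_root_def)
  moreover have "w \<circ> refl \<alpha> \<circ> refl \<alpha> = w" by (auto simp: fun_eq_iff refl_refl[OF \<alpha>0])
  ultimately show ?thesis using card_inv_set_comp_refl_pos[OF w' \<alpha>] by metis
qed

lemma card_inv_set_le_length: "set ws \<subseteq> \<Delta> \<Longrightarrow> card (invs (refl_word ws)) \<le> length ws"
proof (induction ws rule: rev_induct)
  case Nil
  show ?case by (simp only: refl_word_Nil inv_set_id) simp
next
  case (snoc \<alpha> vs)
  have \<alpha>: "\<alpha> \<in> \<Delta>" and vs: "set vs \<subseteq> \<Delta>" using snoc.prems by auto
  have u: "refl_word vs \<in> W" using vs weyl_group_iff_simple_word by blast
  have split: "refl_word (vs @ [\<alpha>]) = refl_word vs \<circ> refl \<alpha>" by (simp add: refl_word_append)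
  have "card (invs (refl_word (vs @ [\<alpha>]))) \<le> card (invs (refl_word vs)) + 1"
  proof (cases "refl_word vs \<alpha> \<in> pos")
    case True
    thus ?thesis unfolding split using card_inv_set_comp_refl_pos[OF u \<alpha>] by linarith
  next
    case False
    hence "neg_root (refl_word vs \<alpha>)" using weyl_root_pos_or_neg[OF u] \<alpha> simple_roots by auto
    thus ?thesis unfolding split using card_inv_set_comp_refl_neg[OF u \<alpha>] by linarith
  qed
  thus ?case using snoc.IH[OF vs] length_append_singleton[of vs \<alpha>] by linarith
qed

lemma exchange_condition:
  "set vs \<subseteq> \<Delta> \<Longrightarrow> \<alpha> \<in> \<Delta> \<Longrightarrow> neg_root (refl_word vs \<alpha>) \<Longrightarrow>
    \<exists>vs'. set vs' \<subseteq> \<Delta> \<and> length vs' + 1 = length vs \<and> refl_word vs = refl_word vs' \<circ> refl \<alpha>"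
proof (induction vs)
  case Nil
  thus ?case using simple_pos_root pos_root_not_neg by auto
next
  case (Cons a rest)
  have a: "a \<in> \<Delta>" and rest: "set rest \<subseteq> \<Delta>" using Cons.prems by auto
  have r: "refl_word rest \<in> W" using rest weyl_group_iff_simple_word by blast
  have "refl_word rest \<alpha> \<in> pos \<or> neg_root (refl_word rest \<alpha>)"
    using weyl_root_pos_or_neg[OF r] Cons.prems(2) simple_roots by auto
  thus ?case
  proof
    assume "neg_root (refl_word rest \<alpha>)"
    from Cons.IH[OF rest Cons.prems(2) this] obtain vs' where
      "set vs' \<subseteq> \<Delta>" "length vs' + 1 = length rest" "refl_word rest = refl_word vs' \<circ> refl \<alpha>"
      by blast
    thus ?thesis using a by (intro exI[of _ "a # vs'"]) (auto simp: o_assoc)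
  next
    assume pos: "refl_word rest \<alpha> \<in> pos"
    have "refl_word rest \<alpha> = a"
    proof (rule ccontr)
      assume "refl_word rest \<alpha> \<noteq> a"
      hence "refl a (refl_word rest \<alpha>) \<in> pos" using refl_simple_pos_root[OF pos a] by blast
      with Cons.prems(3) pos_root_not_neg show False by simp
    qed
    hence "refl a \<circ> refl_word rest = refl_word rest \<circ> refl \<alpha>"
      using refl_conj_weyl[OF r, of \<alpha>] Cons.prems(2) simple_roots root_nonzero by auto
    thus ?thesis using rest by (intro exI[of _ rest]) auto
  qed
qed

lemma deletion_condition:
  "set ws \<subseteq> \<Delta> \<Longrightarrow> card (invs (refl_word ws)) < length ws \<Longrightarrow>
    \<exists>ws'. set ws' \<subseteq> \<Delta> \<and> refl_word ws' = refl_word ws \<and> length ws' < length ws"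
proof (induction ws rule: rev_induct)
  case Nil
  thus ?case by simp
next
  case (snoc \<alpha> vs)
  have \<alpha>: "\<alpha> \<in> \<Delta>" and vs: "set vs \<subseteq> \<Delta>" using snoc.prems by auto
  have \<alpha>0: "\<alpha> \<noteq> 0" using \<alpha> simple_roots root_nonzero by auto
  have u: "refl_word vs \<in> W" using vs weyl_group_iff_simple_word by blast
  have split: "refl_word (vs @ [\<alpha>]) = refl_word vs \<circ> refl \<alpha>" by (simp add: refl_word_append)
  show ?case
  proof (cases "card (invs (refl_word vs)) < length vs")
    case True
    from snoc.IH[OF vs True] obtain vs' where
      "set vs' \<subseteq> \<Delta>" "refl_word vs' = refl_word vs" "length vs' < length vs"
      by blast
    thus ?thesis using \<alpha> by (intro exI[of _ "vs' @ [\<alpha>]"]) (auto simp: refl_word_append)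
  next
    case False
    hence "card (invs (refl_word vs)) = length vs" using card_inv_set_le_length[OF vs] by simp
    hence "\<not> refl_word vs \<alpha> \<in> pos"
      using card_inv_set_comp_refl_pos[OF u \<alpha>] snoc.prems(2) length_append_singleton[of vs \<alpha>]
      unfolding split by linarith
    hence "neg_root (refl_word vs \<alpha>)" using weyl_root_pos_or_neg[OF u] \<alpha> simple_roots by auto
    from exchange_condition[OF vs \<alpha> this] obtain vs' where vs':
      "set vs' \<subseteq> \<Delta>" "length vs' + 1 = length vs" "refl_word vs = refl_word vs' \<circ> refl \<alpha>"
      by blast
    have "refl_word (vs @ [\<alpha>]) = refl_word vs'"
      using split vs'(3) by (auto simp: fun_eq_iff refl_refl[OF \<alpha>0])
    thus ?thesis using vs' by (intro exI[of _ vs']) auto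
  qed
qed

theorem weyl_length_eq_card_inv_set:
  assumes w: "w \<in> W"
  shows "weyl_length \<Delta> w = card (invs w)"
proof -
  let ?P = "\<lambda>k. \<exists>ws. set ws \<subseteq> \<Delta> \<and> length ws = k \<and> refl_word ws = w"
  obtain ws where "set ws \<subseteq> \<Delta>" "refl_word ws = w" using w weyl_group_iff_simple_word by blast
  hence "?P (weyl_length \<Delta> w)" unfolding weyl_length_def by (intro LeastI[of ?P]) blast
  then obtain ws0 where ws0: "set ws0 \<subseteq> \<Delta>" "length ws0 = weyl_length \<Delta> w" "refl_word ws0 = w"
    by blast
  have "\<not> card (invs w) < length ws0"
  proof
    assume "card (invs w) < length ws0"
    then obtain ws' where "set ws' \<subseteq> \<Delta>" "refl_word ws' = w" "length ws' < length ws0"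
      using deletion_condition[OF ws0(1)] ws0(3) by auto
    moreover from this have "weyl_length \<Delta> w \<le> length ws'"
      unfolding weyl_length_def by (intro Least_le) blast
    ultimately show False using ws0(2) by simp
  qed
  thus ?thesis using card_inv_set_le_length[OF ws0(1)] ws0 by simp
qed

lemma right_descents_eq:
  assumes w: "w \<in> W"
  shows "right_descents \<Delta> w = \<Delta> \<inter> invs w"
proof (intro set_eqI iffI)
  fix \<alpha>
  {
    assume \<alpha>: "\<alpha> \<in> \<Delta>"
    have w': "w \<circ> refl \<alpha> \<in> W" using weyl_comp_refl \<alpha> simple_roots w by auto
    have "w \<alpha> \<in> pos \<or> neg_root (w \<alpha>)" using weyl_root_pos_or_neg[OF w] \<alpha> simple_roots by auto
    hence "weyl_length \<Delta> (w \<circ> refl \<alpha>) < weyl_length \<Delta> w \<longleftrightarrow> neg_root (w \<alpha>)"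
      using card_inv_set_comp_refl_pos[OF w \<alpha>] card_inv_set_comp_refl_neg[OF w \<alpha>]
        pos_root_not_neg weyl_length_eq_card_inv_set[OF w] weyl_length_eq_card_inv_set[OF w']
      by auto
  }
  thus "\<alpha> \<in> right_descents \<Delta> w \<Longrightarrow> \<alpha> \<in> \<Delta> \<inter> invs w"
    and "\<alpha> \<in> \<Delta> \<inter> invs w \<Longrightarrow> \<alpha> \<in> right_descents \<Delta> w"
    by (auto simp: right_descents_def inv_set_iff simple_pos_root)
qed

lemma inv_set_refl_comp_simple_image:
  assumes w: "w \<in> W" and \<beta>: "\<beta> \<in> pos" and simple: "w \<beta> \<in> \<Delta>"
  shows "invs (refl (w \<beta>) \<circ> w) = insert \<beta> (invs w)"
proof -
  define \<alpha> where "\<alpha> = w \<beta>"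
  have \<alpha>: "\<alpha> \<in> \<Delta>" and \<alpha>0: "\<alpha> \<noteq> 0" using simple simple_roots root_nonzero by (auto simp: \<alpha>_def)
  have lin: "linear w" using weyl_linear[OF w] .
  have same_sign: "neg_root (refl \<alpha> (w \<gamma>)) \<longleftrightarrow> neg_root (w \<gamma>)" if \<gamma>: "\<gamma> \<in> pos" "\<gamma> \<noteq> \<beta>" for \<gamma>
  proof -
    have "w \<gamma> \<noteq> \<alpha>" using \<gamma>(2) weyl_inj[OF w] by (auto simp: \<alpha>_def inj_def)
    moreover have "- w \<gamma> \<noteq> \<alpha>"
    proof
      assume "- w \<gamma> = \<alpha>"
      hence "w (- \<gamma>) = w \<beta>" using linear_neg[OF lin] by (simp add: \<alpha>_def)
      hence "- \<gamma> = \<beta>" using weyl_inj[OF w] by (simp add: inj_def)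
      thus False using \<beta> \<gamma>(1) pos_root_not_neg by (auto simp: neg_root_def)
    qed
    moreover have "w \<gamma> \<in> pos \<or> - w \<gamma> \<in> pos"
      using weyl_root_pos_or_neg[OF w] \<gamma>(1) pos_root_is_root by (auto simp: neg_root_def)
    ultimately show ?thesis
      using refl_simple_pos_root[OF _ \<alpha>, of "w \<gamma>"] refl_simple_pos_root[OF _ \<alpha>, of "- w \<gamma>"]
        pos_root_not_neg linear_neg[OF refl_linear, of \<alpha> "w \<gamma>"]
      by (auto simp: neg_root_def)
  qed
  have "neg_root (refl \<alpha> (w \<beta>))" using refl_self[OF \<alpha>0] \<alpha> by (simp add: \<alpha>_def neg_root_uminus_simple)
  show ?thesis
  proof (intro set_eqI)
    fix \<gamma>
    show "\<gamma> \<in> invs (refl (w \<beta>) \<circ> w) \<longleftrightarrow> \<gamma> \<in> insert \<beta> (invs w)"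
    proof (cases "\<gamma> = \<beta>")
      case True
      thus ?thesis using \<open>neg_root (refl \<alpha> (w \<beta>))\<close> \<beta> by (simp add: inv_set_iff \<alpha>_def)
    next
      case False
      thus ?thesis using same_sign[of \<gamma>] by (auto simp: inv_set_iff \<alpha>_def)
    qed
  qed
qed

lemma weyl_preimage_split:
  assumes w: "w \<in> W" and \<beta>: "\<beta> \<in> \<Phi>" and pos: "w \<beta> \<in> pos" and non_simple: "w \<beta> \<notin> \<Delta>"
  shows "\<exists>x y. x \<in> \<Phi> \<and> y \<in> \<Phi> \<and> x + y = \<beta> \<and> w x \<in> pos \<and> w y \<in> pos"
proof -
  obtain \<alpha> where \<alpha>: "\<alpha> \<in> \<Delta>" "w \<beta> - \<alpha> \<in> pos" using pos_root_minus_simple[OF pos non_simple] by blast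
  obtain x y where xy: "x \<in> \<Phi>" "w x = \<alpha>" "y \<in> \<Phi>" "w y = w \<beta> - \<alpha>"
    using weyl_image_roots[OF w] \<alpha> simple_roots pos_root_is_root by (metis imageE subsetD)
  have "w (x + y) = w \<beta>" using xy linear_add[OF weyl_linear[OF w]] by simp
  hence "x + y = \<beta>" using weyl_inj[OF w] by (simp add: inj_def)
  thus ?thesis using xy \<alpha> simple_pos_root by auto
qed

lemma coef_linear_image_nonneg:
  assumes f: "linear f" and d: "\<forall>a\<in>\<Delta>. coef d a \<ge> 0" and pos: "\<forall>a\<in>\<Delta>. coef d a \<noteq> 0 \<longrightarrow> f a \<in> pos"
    and b: "b \<in> \<Delta>"
  shows "coef (f d) b \<ge> 0"
proof -
  have "f d = (\<Sum>a\<in>\<Delta>. coef d a *\<^sub>R f a)"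
    by (subst coef_expansion) (simp add: linear_sum[OF f] linear_scale[OF f])
  hence "coef (f d) b = (\<Sum>a\<in>\<Delta>. coef d a * coef (f a) b)" by (simp add: coef_sum coef_scale)
  also have "\<dots> \<ge> 0"
    using d pos b by (intro sum_nonneg) (fastforce simp: pos_root_iff)
  finally show ?thesis .
qed

end

section \<open>Lower sets of \<open>M\<^sub>i\<close> and minimal coset representatives\<close>

locale cominuscule_root = based_root_system +
  fixes \<alpha>i :: 'a
  assumes irreducible: "irreducible_root_system \<Phi>" and simple_\<alpha>i: "\<alpha>i \<in> \<Delta>"
    and coef_highest_root: "coef (highest_root \<Phi> \<Delta>) \<alpha>i = 1"
begin

abbreviation M :: "'a set" where "M \<equiv> M_set \<Phi> \<Delta> \<alpha>i"

lemma pos_root_coef_le_1: "\<beta> \<in> pos \<Longrightarrow> coef \<beta> \<alpha>i \<le> 1"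
  using coef_le_highest_root[OF irreducible _ simple_\<alpha>i] coef_highest_root by simp

lemma pos_root_coef_0_or_1: "\<beta> \<in> pos \<Longrightarrow> coef \<beta> \<alpha>i = 0 \<or> coef \<beta> \<alpha>i = 1"
  using pos_root_coef_le_1[of \<beta>] coef_root_int[of \<beta> \<alpha>i] pos_root_is_root simple_\<alpha>i
  by (auto simp: pos_root_iff elim!: Ints_cases)

lemma M_iff: "\<beta> \<in> M \<longleftrightarrow> \<beta> \<in> pos \<and> coef \<beta> \<alpha>i = 1"
proof -
  have "root_le \<Delta> \<alpha>i \<beta> \<longleftrightarrow> coef \<beta> \<alpha>i \<ge> 1" if \<beta>: "\<beta> \<in> pos" for \<beta>
  proof -
    have "\<alpha>i \<in> \<Phi>" using simple_\<alpha>i simple_roots by auto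
    hence "root_le \<Delta> \<alpha>i \<beta> \<longleftrightarrow> (\<forall>a\<in>\<Delta>. coef \<alpha>i a \<le> coef \<beta> a)"
      using root_le_iff \<beta> pos_root_is_root by blast
    also have "\<dots> \<longleftrightarrow> coef \<beta> \<alpha>i \<ge> 1" using \<beta> simple_\<alpha>i by (auto simp: coef_simple pos_root_iff)
    finally show ?thesis .
  qed
  thus ?thesis using pos_root_coef_le_1 by (force simp: M_set_def)
qed

lemma simple_in_M_iff: "a \<in> \<Delta> \<Longrightarrow> a \<in> M \<longleftrightarrow> a = \<alpha>i"
  using simple_pos_root simple_\<alpha>i by (auto simp: M_iff coef_simple)

lemma M_sum_not_root: "\<beta> \<in> M \<Longrightarrow> \<gamma> \<in> M \<Longrightarrow> \<beta> + \<gamma> \<notin> \<Phi>"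
  using pos_root_coef_le_1[of "\<beta> + \<gamma>"] by (auto simp: M_iff pos_root_iff coef_add)

lemma M_summand:
  assumes "x \<in> pos" "y \<in> pos" "x + y \<in> M"
  shows "x \<in> M \<or> y \<in> M"
  using assms pos_root_coef_0_or_1[of x] pos_root_coef_0_or_1[of y] by (auto simp: M_iff coef_add)

definition M_lower_set :: "'a set \<Rightarrow> bool" where
  "M_lower_set N \<longleftrightarrow> N \<subseteq> M \<and> (\<forall>\<beta>\<in>N. \<forall>\<gamma>\<in>M. root_le \<Delta> \<gamma> \<beta> \<longrightarrow> \<gamma> \<in> N)"

lemma M_upward_closed: "\<beta> \<in> M \<Longrightarrow> \<gamma> \<in> pos \<Longrightarrow> root_le \<Delta> \<beta> \<gamma> \<Longrightarrow> \<gamma> \<in> M"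
proof -
  assume \<beta>: "\<beta> \<in> M" and \<gamma>: "\<gamma> \<in> pos" "root_le \<Delta> \<beta> \<gamma>"
  have "coef \<beta> \<alpha>i \<le> coef \<gamma> \<alpha>i"
    using \<gamma> \<beta> root_le_iff[of \<gamma> \<beta>] pos_root_is_root simple_\<alpha>i by (auto simp: M_iff)
  thus "\<gamma> \<in> M" using \<beta> \<gamma>(1) pos_root_coef_le_1[of \<gamma>] by (auto simp: M_iff)
qed

lemma abelian_ideal_M_diff_iff:
  assumes N: "N \<subseteq> M"
  shows "abelian_ideal \<Phi> \<Delta> (M - N) \<longleftrightarrow> M_lower_set N"
proof
  assume ideal: "abelian_ideal \<Phi> \<Delta> (M - N)"
  show "M_lower_set N"
    unfolding M_lower_set_def
  proof (intro conjI ballI impI N)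
    fix \<beta> \<gamma> assume \<beta>: "\<beta> \<in> N" and \<gamma>: "\<gamma> \<in> M" "root_le \<Delta> \<gamma> \<beta>"
    show "\<gamma> \<in> N"
    proof (rule ccontr)
      assume "\<gamma> \<notin> N"
      moreover have "\<beta> \<in> pos" using \<beta> N by (auto simp: M_iff)
      ultimately have "\<beta> \<in> M - N" using ideal \<gamma> unfolding abelian_ideal_def by blast
      with \<beta> show False by blast
    qed
  qed
next
  assume lower: "M_lower_set N"
  show "abelian_ideal \<Phi> \<Delta> (M - N)"
    unfolding abelian_ideal_def
  proof (intro conjI ballI impI)
    show "M - N \<subseteq> pos" by (auto simp: M_iff)
  next
    fix \<beta> \<gamma> assume \<beta>: "\<beta> \<in> M - N" and \<gamma>: "\<gamma> \<in> pos" "root_le \<Delta> \<beta> \<gamma>"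
    have "\<gamma> \<in> M" using M_upward_closed \<beta> \<gamma> by blast
    moreover have "\<gamma> \<notin> N" using lower \<beta> \<gamma>(2) unfolding M_lower_set_def by blast
    ultimately show "\<gamma> \<in> M - N" by blast
  next
    fix \<beta> \<gamma> assume "\<beta> \<in> M - N" "\<gamma> \<in> M - N"
    thus "\<beta> + \<gamma> \<notin> \<Phi>" using M_sum_not_root by blast
  qed
qed

lemma min_coset_rep_simple_pos:
  assumes w: "w \<in> min_coset_reps \<Phi> \<Delta> \<alpha>i" and a: "a \<in> \<Delta>" "a \<noteq> \<alpha>i"
  shows "w a \<in> pos"
proof -
  have "w \<in> W" and "right_descents \<Delta> w \<subseteq> {\<alpha>i}" using w by (auto simp: min_coset_reps_def)
  hence "a \<notin> invs w" using right_descents_eq a by blast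
  thus ?thesis using weyl_root_pos_or_neg[OF \<open>w \<in> W\<close>, of a] a simple_roots simple_pos_root
    by (auto simp: inv_set_iff)
qed

lemma min_coset_rep_coef_nonneg:
  assumes w: "w \<in> min_coset_reps \<Phi> \<Delta> \<alpha>i" and d: "\<forall>a\<in>\<Delta>. coef d a \<ge> 0" "coef d \<alpha>i = 0"
    and b: "b \<in> \<Delta>"
  shows "coef (w d) b \<ge> 0"
proof (rule coef_linear_image_nonneg[OF _ d(1) _ b])
  show "linear w" using w weyl_linear by (auto simp: min_coset_reps_def)
  show "\<forall>a\<in>\<Delta>. coef d a \<noteq> 0 \<longrightarrow> w a \<in> pos" using min_coset_rep_simple_pos[OF w] d(2) by metis
qed

lemma M_lower_set_inv_set:
  assumes w: "w \<in> min_coset_reps \<Phi> \<Delta> \<alpha>i"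
  shows "M_lower_set (invs w)"
proof -
  have lin: "linear w" and wW: "w \<in> W" using w weyl_linear by (auto simp: min_coset_reps_def)
  have sub: "\<beta> \<in> M" if \<beta>: "\<beta> \<in> invs w" for \<beta>
  proof (rule ccontr)
    assume "\<beta> \<notin> M"
    hence "coef \<beta> \<alpha>i = 0" using \<beta> pos_root_coef_0_or_1 by (auto simp: M_iff inv_set_iff)
    moreover have "\<forall>a\<in>\<Delta>. coef \<beta> a \<ge> 0" using \<beta> by (simp add: inv_set_iff pos_root_iff)
    ultimately have "\<not> neg_root (w \<beta>)"
      using min_coset_rep_coef_nonneg[OF w] coef_nonneg_not_neg_root by blast
    with \<beta> show False by (simp add: inv_set_iff)
  qed
  have "\<gamma> \<in> invs w" if \<beta>: "\<beta> \<in> invs w" and \<gamma>: "\<gamma> \<in> M" "root_le \<Delta> \<gamma> \<beta>" for \<beta> \<gamma>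
  proof (rule ccontr)
    assume "\<gamma> \<notin> invs w"
    hence w\<gamma>: "w \<gamma> \<in> pos"
      using \<gamma>(1) weyl_root_pos_or_neg[OF wW, of \<gamma>] pos_root_is_root by (auto simp: M_iff inv_set_iff)
    have \<beta>M: "\<beta> \<in> M" using sub[OF \<beta>] .
    have "\<forall>a\<in>\<Delta>. coef (\<beta> - \<gamma>) a \<ge> 0"
      using \<gamma> \<beta>M root_le_iff[of \<beta> \<gamma>] pos_root_is_root by (auto simp: M_iff coef_diff)
    moreover have "coef (\<beta> - \<gamma>) \<alpha>i = 0" using \<gamma>(1) \<beta>M by (simp add: M_iff coef_diff)
    ultimately have "\<forall>b\<in>\<Delta>. coef (w (\<beta> - \<gamma>)) b \<ge> 0" using min_coset_rep_coef_nonneg[OF w] by blast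
    moreover have "w \<beta> = w \<gamma> + w (\<beta> - \<gamma>)" using linear_diff[OF lin, of \<beta> \<gamma>] by simp
    ultimately have "\<forall>b\<in>\<Delta>. coef (w \<beta>) b \<ge> 0" using w\<gamma> by (simp add: pos_root_iff coef_add)
    hence "\<not> neg_root (w \<beta>)" by (rule coef_nonneg_not_neg_root)
    with \<beta> show False by (simp add: inv_set_iff)
  qed
  thus ?thesis using sub unfolding M_lower_set_def by blast
qed

lemma M_lower_set_remove_max:
  assumes N: "M_lower_set N" and \<beta>: "\<beta> \<in> N" and max: "\<forall>\<gamma>\<in>N. height \<gamma> \<le> height \<beta>"
  shows "M_lower_set (N - {\<beta>})"
  unfolding M_lower_set_def
proof (intro conjI ballI impI)
  show "N - {\<beta>} \<subseteq> M" using N by (auto simp: M_lower_set_def)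
  fix \<beta>' \<gamma> assume \<beta>': "\<beta>' \<in> N - {\<beta>}" and \<gamma>: "\<gamma> \<in> M" "root_le \<Delta> \<gamma> \<beta>'"
  have "\<gamma> \<in> N" using N \<beta>' \<gamma> by (auto simp: M_lower_set_def)
  moreover have "\<gamma> \<noteq> \<beta>"
  proof
    assume "\<gamma> = \<beta>"
    moreover have "\<beta>' \<in> pos" using N \<beta>' by (auto simp: M_lower_set_def M_iff)
    ultimately have "height \<beta> < height \<beta>'"
      using \<gamma> \<beta>' height_less_if_coef_le[of \<beta> \<beta>'] root_le_iff[of \<beta>' \<beta>] pos_root_is_root
      by (auto simp: M_iff)
    with max \<beta>' show False by auto
  qed
  ultimately show "\<gamma> \<in> N - {\<beta>}" by blast
qed

text \<open>If \<open>w \<beta>\<close> were not simple, \<open>\<beta> = x + y\<close> with \<open>w x, w y > 0\<close>. A negative summand would put its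
  negative into \<open>N \<subseteq> M\<close>, contradicting that \<open>M\<close> is abelian; of two positive summands one lies
  in \<open>M\<close> below \<open>\<beta>\<close>, hence in \<open>N - {\<beta>} = N(w)\<close>, contradicting \<open>w x > 0\<close>.\<close>

lemma M_lower_set_image_simple:
  assumes w: "w \<in> W" and N: "M_lower_set N" and \<beta>: "\<beta> \<in> N" and inv: "invs w = N - {\<beta>}"
  shows "w \<beta> \<in> \<Delta>"
proof (rule ccontr)
  assume non_simple: "w \<beta> \<notin> \<Delta>"
  have \<beta>M: "\<beta> \<in> M" using N \<beta> by (auto simp: M_lower_set_def)
  hence \<beta>pos: "\<beta> \<in> pos" by (simp add: M_iff)
  have "\<beta> \<notin> invs w" using inv by blast
  hence "w \<beta> \<in> pos" using weyl_root_pos_or_neg[OF w] \<beta>pos pos_root_is_root by (auto simp: inv_set_iff)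
  then obtain x y where xy: "x \<in> \<Phi>" "y \<in> \<Phi>" "x + y = \<beta>" "w x \<in> pos" "w y \<in> pos"
    using weyl_preimage_split[OF w _ _ non_simple] \<beta>pos pos_root_is_root by blast
  have summand_pos: "z \<in> pos" if z: "z \<in> \<Phi>" "w z \<in> pos" "\<beta> - z \<in> \<Phi>" for z
  proof (rule ccontr)
    assume "z \<notin> pos"
    hence "- z \<in> pos" using root_pos_or_neg[OF z(1)] by (simp add: neg_root_def)
    moreover have "w (- z) = - w z" using linear_neg[OF weyl_linear[OF w]] .
    ultimately have "- z \<in> invs w" using z(2) by (simp add: inv_set_iff neg_root_def)
    hence "- z \<in> M" using inv N by (auto simp: M_lower_set_def)
    thus False using M_sum_not_root[OF \<beta>M, of "- z"] z(3) by simp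
  qed
  have summand_not_M: "z \<notin> M" if z: "w z \<in> pos" "\<beta> - z \<in> pos" for z
  proof
    assume zM: "z \<in> M"
    have "root_le \<Delta> z \<beta>" using z(2) by (simp add: root_le_def pos_roots_def)
    hence "z \<in> N" using N \<beta> zM by (auto simp: M_lower_set_def)
    moreover have "z \<noteq> \<beta>" using z(2) zero_not_root by (auto simp: pos_root_iff)
    ultimately have "z \<in> invs w" using inv by blast
    thus False using z(1) pos_root_not_neg by (simp add: inv_set_iff)
  qed
  have diff: "\<beta> - x = y" "\<beta> - y = x" using xy(3) by (auto simp: algebra_simps)
  have "x \<in> pos" "y \<in> pos" using summand_pos[of x] summand_pos[of y] xy diff by auto
  moreover have "x \<notin> M" "y \<notin> M" using summand_not_M[of x] summand_not_M[of y] xy diff calculation by auto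
  ultimately show False using M_summand xy(3) \<beta>M by blast
qed

lemma M_lower_set_is_inv_set: "M_lower_set N \<Longrightarrow> \<exists>w\<in>W. invs w = N"
proof (induction "card N" arbitrary: N rule: less_induct)
  case less
  show ?case
  proof (cases "N = {}")
    case True
    have "id \<in> W" using weyl_group_iff[of id] by (auto intro!: exI[of _ "[]"])
    thus ?thesis using True inv_set_id by blast
  next
    case False
    have "N \<subseteq> pos" using less.prems by (auto simp: M_lower_set_def M_iff)
    hence "finite N" using finite_pos_roots finite_subset by blast
    then obtain \<beta> where \<beta>: "\<beta> \<in> N" "\<forall>\<gamma>\<in>N. height \<gamma> \<le> height \<beta>"
      using finite_ex_max_image[of N height] False by blast
    have "card (N - {\<beta>}) < card N" using \<open>finite N\<close> \<beta>(1) by (rule card_Diff1_less)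
    moreover have lower: "M_lower_set (N - {\<beta>})" using M_lower_set_remove_max[OF less.prems \<beta>] .
    ultimately obtain w where w: "w \<in> W" "invs w = N - {\<beta>}" using less.hyps by blast
    have "w \<beta> \<in> \<Delta>" using M_lower_set_image_simple[OF w(1) less.prems \<beta>(1) w(2)] .
    hence "invs (refl (w \<beta>) \<circ> w) = N"
      using inv_set_refl_comp_simple_image[OF w(1)] w(2) \<beta>(1) less.prems
      by (auto simp: M_lower_set_def M_iff)
    moreover have "refl (w \<beta>) \<circ> w \<in> W"
      using weyl_refl_comp[OF _ w(1)] \<open>w \<beta> \<in> \<Delta>\<close> simple_roots by auto
    ultimately show ?thesis by blast
  qed
qed

theorem M_lower_set_iff_inv_set:
  "M_lower_set N \<longleftrightarrow> (\<exists>w \<in> min_coset_reps \<Phi> \<Delta> \<alpha>i. N = invs w)"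
proof
  assume lower: "M_lower_set N"
  then obtain w where w: "w \<in> W" "invs w = N" using M_lower_set_is_inv_set by blast
  have "right_descents \<Delta> w \<subseteq> {\<alpha>i}"
    using right_descents_eq[OF w(1)] w(2) lower simple_in_M_iff by (auto simp: M_lower_set_def)
  thus "\<exists>w \<in> min_coset_reps \<Phi> \<Delta> \<alpha>i. N = invs w" using w by (auto simp: min_coset_reps_def)
next
  assume "\<exists>w \<in> min_coset_reps \<Phi> \<Delta> \<alpha>i. N = invs w"
  thus "M_lower_set N" using M_lower_set_inv_set by blast
qed

end

theorem proposition5p4:
  fixes \<Phi> \<Delta> N :: "'a::euclidean_space set" and \<alpha>i :: 'a
  assumes "irreducible_root_system \<Phi>"
    and "root_basis \<Phi> \<Delta>"
    and "\<alpha>i \<in> \<Delta>"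
    and "root_coeff \<Delta> (highest_root \<Phi> \<Delta>) \<alpha>i = 1"
    and "N \<subseteq> M_set \<Phi> \<Delta> \<alpha>i"
  shows "abelian_ideal \<Phi> \<Delta> (M_set \<Phi> \<Delta> \<alpha>i - N) \<longleftrightarrow>
         (\<exists>w \<in> min_coset_reps \<Phi> \<Delta> \<alpha>i. N = inv_set \<Phi> \<Delta> w)"
proof -
  interpret cominuscule_root \<Phi> \<Delta> \<alpha>i
    using assms(1-4) by unfold_locales (auto simp: irreducible_root_system_def)
  show ?thesis using abelian_ideal_M_diff_iff[OF assms(5)] M_lower_set_iff_inv_set by simp
qed

end
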